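(* For $\varepsilon\in[0,1]$, let $C(\varepsilon)=\min\{C(P,Q) : P,Q \text{ probability distributions on a common countable set with } d_{\text{TV}}(P,Q)=\varepsilon\}$. This minimum exists and $$C(\varepsilon)=\begin{cases}-\frac12\log(1-\varepsilon^2) & \text{if } \varepsilon\in[0,1),\\ +\infty & \text{if } \varepsilon=1.\end{cases}$$ For $\varepsilon\in[0,1)$ it is achieved by the pair of 2-element distributions $P=\left(\frac{1-\varepsilon}{2},\frac{1+\varepsilon}{2}\right)$, $Q=\left(\frac{1+\varepsilon}{2},\frac{1-\varepsilon}{2}\right)$.
   Context: For probability distributions $P,Q$ on a countable set, $d_{\text{TV}}(P,Q)=\frac12\sum_x|P(x)-Q(x)|$ is the total variation distance, and the Chernoff information is $C(P,Q)=-\min_{\lambda\in[0,1]}\log\left(\sum_x P(x)^\lambda Q(x)^{1-\lambda}\right)$. Logarithms are natural. *)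

theory Defs
  imports "HOL-Probability.Probability"
begin

definition dtv :: "'a pmf \<Rightarrow> 'a pmf \<Rightarrow> real" where
  "dtv P Q = (1/2) * (\<Sum>\<^sub>\<infinity>x. \<bar>pmf P x - pmf Q x\<bar>)"

definition chernoff_sum :: "'a pmf \<Rightarrow> 'a pmf \<Rightarrow> real \<Rightarrow> real" where
  "chernoff_sum P Q l = (\<Sum>\<^sub>\<infinity>x. pmf P x powr l * pmf Q x powr (1 - l))"

text \<open>Chernoff information  C(P,Q) = - min_{lambda in [0,1]} log(sum ...), valued in
  the extended reals (log 0 = -infinity, so -log 0 = +infinity).  The minimum is
  rendered as an infimum, i.e. C is a supremum of -log.\<close>
definition chernoff :: "'a pmf \<Rightarrow> 'a pmf \<Rightarrow> ereal" where
  "chernoff P Q = (SUP l\<in>{0..1::real}.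
     (if chernoff_sum P Q l = 0 then \<infinity> else ereal (- ln (chernoff_sum P Q l))))"

definition two_point :: "real \<Rightarrow> nat pmf" where
  "two_point p1 = map_pmf (\<lambda>b. if b then 1 else 0) (bernoulli_pmf p1)"

end

theory Submission imports Defs begin

text \<open>
  Write \<open>B = \<Sum>\<^sub>x \<surd>(P x Q x)\<close> for the Bhattacharyya coefficient, the Chernoff sum at
  \<open>\<lambda> = 1/2\<close>. Pointwise, \<open>|p - q| = |\<surd>p - \<surd>q| (\<surd>p + \<surd>q)\<close> is bounded by AM-GM with a free
  weight \<open>t > 0\<close>; summing gives \<open>2 d\<^sub>T\<^sub>V \<le> t (1 - B) + (1 + B)/t\<close>, and the optimal \<open>t\<close>
  yields \<open>d\<^sub>T\<^sub>V\<^sup>2 + B\<^sup>2 \<le> 1\<close>. Since \<open>C(P,Q) \<ge> -log B\<close>, this is the lower bound. For the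
  symmetric two-point pair every Chernoff sum is \<open>x\<^sup>\<lambda> y\<^sup>1\<^sup>-\<^sup>\<lambda> + y\<^sup>\<lambda> x\<^sup>1\<^sup>-\<^sup>\<lambda> \<ge> 2\<surd>(x y) = \<surd>(1 - \<epsilon>\<^sup>2)\<close>,
  so the supremum defining \<open>C\<close> is attained at \<open>\<lambda> = 1/2\<close>.
\<close>

lemma summable_on_pmf: "pmf P summable_on A"
  using abs_summable_equivalent abs_summable_summable pmf_abs_summable by blast

lemma infsum_pmf_eq_1: "(\<Sum>\<^sub>\<infinity>x. pmf P x) = 1"
  using infsetsum_infsum[OF pmf_abs_summable, of P UNIV] infsetsum_pmf_eq_1[of P UNIV] by simp

lemma abs_diff_le_weighted_sqrt_bound:
  fixes p q t :: real
  assumes "p \<ge> 0" "q \<ge> 0" "t > 0"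
  shows "\<bar>p - q\<bar> \<le> (t/2 + 1/(2*t)) * (p + q) + (1/t - t) * (sqrt p * sqrt q)"
proof -
  define a b where "a = sqrt p" and "b = sqrt q"
  have "a \<ge> 0" "b \<ge> 0" "p = a\<^sup>2" "q = b\<^sup>2"
    using assms by (auto simp: a_def b_def field_simps)
  have amgm: "2 * (x * y) \<le> t * x\<^sup>2 + y\<^sup>2 / t" for x y :: real
  proof -
    have "0 \<le> (t*x - y)\<^sup>2 / t" using assms by simp
    also have "\<dots> = t * x\<^sup>2 + y\<^sup>2 / t - 2 * (x * y)"
      using assms by (simp add: power2_eq_square field_simps)
    finally show ?thesis by simp
  qed
  have "p - q = (a - b) * (a + b)"
    by (simp add: \<open>p = a\<^sup>2\<close> \<open>q = b\<^sup>2\<close> power2_eq_square algebra_simps)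
  then have "\<bar>p - q\<bar> = \<bar>a - b\<bar> * (a + b)"
    using \<open>a \<ge> 0\<close> \<open>b \<ge> 0\<close> by (simp add: abs_mult)
  also have "\<dots> \<le> (t * \<bar>a - b\<bar>\<^sup>2 + (a + b)\<^sup>2 / t) / 2"
    using amgm[of "\<bar>a - b\<bar>" "a + b"] by simp
  also have "\<dots> = (t/2 + 1/(2*t)) * (a\<^sup>2 + b\<^sup>2) + (1/t - t) * (a * b)"
    using assms by (simp add: power2_eq_square field_simps)
  finally show ?thesis
    using assms by (simp add: a_def b_def)
qed

lemma chernoff_sum_half: "chernoff_sum P Q (1/2) = (\<Sum>\<^sub>\<infinity>x. sqrt (pmf P x) * sqrt (pmf Q x))"
  unfolding chernoff_sum_def by (simp add: powr_half_sqrt)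

lemma sqrt_pmf_mult_le: "2 * (sqrt (pmf P x) * sqrt (pmf Q x)) \<le> pmf P x + pmf Q x"
  using arith_geo_mean_sqrt[of "pmf P x" "pmf Q x"] by (simp add: real_sqrt_mult)

lemma summable_on_pmf_add: "(\<lambda>x. pmf P x + pmf Q x) summable_on A"
  by (intro summable_on_add summable_on_pmf)

lemma infsum_pmf_add: "(\<Sum>\<^sub>\<infinity>x. pmf P x + pmf Q x) = 2"
  using infsum_add[OF summable_on_pmf[of P UNIV] summable_on_pmf[of Q UNIV]] by (simp add: infsum_pmf_eq_1)

lemma summable_on_sqrt_pmf_mult: "(\<lambda>x. sqrt (pmf P x) * sqrt (pmf Q x)) summable_on A"
proof (rule summable_on_comparison_test[OF summable_on_pmf_add[of P Q]])
  show "sqrt (pmf P x) * sqrt (pmf Q x) \<le> pmf P x + pmf Q x" for x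
  proof -
    have "0 \<le> sqrt (pmf P x) * sqrt (pmf Q x)"
      by simp
    then show ?thesis
      using sqrt_pmf_mult_le[of P x Q] by linarith
  qed
qed simp

lemma summable_on_abs_pmf_diff: "(\<lambda>x. \<bar>pmf P x - pmf Q x\<bar>) summable_on A"
  by (rule summable_on_comparison_test[OF summable_on_pmf_add[of P Q]]) (simp_all add: abs_le_iff)

lemma chernoff_sum_half_nonneg: "chernoff_sum P Q (1/2) \<ge> 0"
  unfolding chernoff_sum_half by (rule infsum_nonneg) simp

lemma chernoff_sum_half_le_1: "chernoff_sum P Q (1/2) \<le> 1"
proof -
  have "2 * chernoff_sum P Q (1/2) = (\<Sum>\<^sub>\<infinity>x. 2 * (sqrt (pmf P x) * sqrt (pmf Q x)))"
    unfolding chernoff_sum_half by (simp add: infsum_cmult_right')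
  also have "\<dots> \<le> (\<Sum>\<^sub>\<infinity>x. pmf P x + pmf Q x)"
    by (intro infsum_mono summable_on_cmult_right summable_on_sqrt_pmf_mult sqrt_pmf_mult_le
        summable_on_pmf_add)
  finally show ?thesis
    by (simp add: infsum_pmf_add)
qed

lemma dtv_nonneg: "dtv P Q \<ge> 0"
  unfolding dtv_def by (simp add: infsum_nonneg)

lemma dtv_le_weighted_bound:
  fixes P Q :: "'a pmf" and t :: real
  assumes "t > 0"
  defines "B \<equiv> chernoff_sum P Q (1/2)"
  shows "2 * dtv P Q \<le> t * (1 - B) + (1 + B) / t"
proof -
  let ?g = "\<lambda>x. sqrt (pmf P x) * sqrt (pmf Q x)"
  have "2 * dtv P Q = (\<Sum>\<^sub>\<infinity>x. \<bar>pmf P x - pmf Q x\<bar>)"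
    unfolding dtv_def by simp
  also have "\<dots> \<le> (\<Sum>\<^sub>\<infinity>x. (t/2 + 1/(2*t)) * (pmf P x + pmf Q x) + (1/t - t) * ?g x)"
    by (intro infsum_mono summable_on_abs_pmf_diff summable_on_add summable_on_cmult_right
        summable_on_pmf_add summable_on_sqrt_pmf_mult abs_diff_le_weighted_sqrt_bound assms) auto
  also have "\<dots> = (t/2 + 1/(2*t)) * 2 + (1/t - t) * B"
    by (subst infsum_add) (auto intro!: summable_on_cmult_right summable_on_pmf_add
        summable_on_sqrt_pmf_mult simp: infsum_cmult_right' infsum_pmf_add B_def chernoff_sum_half)
  also have "\<dots> = t * (1 - B) + (1 + B) / t"
    using assms by (simp add: field_simps)
  finally show ?thesis .
qed

lemma dtv_squared_le_1_minus_chernoff_sum_half_squared: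
  "(dtv P Q)\<^sup>2 \<le> 1 - (chernoff_sum P Q (1/2))\<^sup>2"
proof -
  define d B where "d = dtv P Q" and "B = chernoff_sum P Q (1/2)"
  have "B \<ge> 0" "B \<le> 1"
    unfolding B_def by (rule chernoff_sum_half_nonneg chernoff_sum_half_le_1)+
  show ?thesis
  proof (cases "d = 0")
    case True
    then show ?thesis using \<open>B \<ge> 0\<close> \<open>B \<le> 1\<close> by (simp add: d_def B_def power_le_one)
  next
    case False
    then have "d > 0" using dtv_nonneg[of P Q] by (simp add: d_def)
    \<comment> \<open>this \<open>t\<close> minimises the right-hand side of the weighted bound\<close>
    define t where "t = (1 + B) / d"
    have "t > 0" using \<open>d > 0\<close> \<open>B \<ge> 0\<close> by (simp add: t_def)
    have "2 * d \<le> t * (1 - B) + (1 + B) / t"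
      using dtv_le_weighted_bound[OF \<open>t > 0\<close>] by (simp add: d_def B_def)
    also have "t * (1 - B) = (1 - B\<^sup>2) / d"
      by (simp add: t_def power2_eq_square algebra_simps)
    also have "(1 + B) / t = d"
      using \<open>d > 0\<close> \<open>B \<ge> 0\<close> by (simp add: t_def)
    finally have "d * d \<le> 1 - B\<^sup>2"
      using \<open>d > 0\<close> by (simp add: field_simps)
    then show ?thesis by (simp add: d_def B_def power2_eq_square)
  qed
qed

lemma chernoff_ge_neg_ln_chernoff_sum:
  assumes "l \<in> {0..1}"
  shows "(if chernoff_sum P Q l = 0 then \<infinity> else ereal (- ln (chernoff_sum P Q l))) \<le> chernoff P Q"
  unfolding chernoff_def using assms by (rule SUP_upper)

lemma chernoff_lower_bound:
  fixes P Q :: "'a::countable pmf"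
  shows "(if dtv P Q < 1 then ereal (- (1/2) * ln (1 - (dtv P Q)\<^sup>2)) else \<infinity>) \<le> chernoff P Q"
proof -
  define d B where "d = dtv P Q" and "B = chernoff_sum P Q (1/2)"
  have bound: "d\<^sup>2 \<le> 1 - B\<^sup>2" "B \<ge> 0"
    unfolding d_def B_def
    by (rule dtv_squared_le_1_minus_chernoff_sum_half_squared chernoff_sum_half_nonneg)+
  have upper: "(if B = 0 then \<infinity> else ereal (- ln B)) \<le> chernoff P Q"
    unfolding B_def by (rule chernoff_ge_neg_ln_chernoff_sum) simp
  show ?thesis
  proof (cases "B = 0")
    case True
    then show ?thesis using upper by simp
  next
    case False
    then have "B > 0" using bound by simp
    then have "d\<^sup>2 < 1"
      using bound zero_less_power[OF \<open>B > 0\<close>, of 2] by linarith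
    then have "d < 1"
      by (simp add: abs_square_less_1 abs_less_iff)
    have "B \<le> sqrt (1 - d\<^sup>2)"
      using bound by (intro real_le_rsqrt) simp
    then have "ln B \<le> ln (sqrt (1 - d\<^sup>2))"
      using \<open>B > 0\<close> by (rule ln_mono)
    also have "\<dots> = ln (1 - d\<^sup>2) / 2"
      using \<open>d\<^sup>2 < 1\<close> by (intro ln_sqrt) simp
    finally have "ereal (- (1/2) * ln (1 - d\<^sup>2)) \<le> ereal (- ln B)"
      by simp
    then show ?thesis
      using upper \<open>d < 1\<close> False by (simp add: d_def del: ereal_less_eq)
  qed
qed

lemma pmf_two_point:
  assumes "0 \<le> p" "p \<le> 1"
  shows "pmf (two_point p) x = (if x = 0 then 1 - p else if x = 1 then p else 0)"
proof -
  have "pmf (two_point p) x = measure (bernoulli_pmf p) ((\<lambda>b. if b then 1 else 0) -` {x})"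
    unfolding two_point_def by (rule pmf_map)
  also have "(\<lambda>b. if b then (1::nat) else 0) -` {x} =
      (if x = 0 then {False} else if x = 1 then {True} else {})"
    unfolding vimage_def by (cases "x = 0"; cases "x = 1") auto
  finally show ?thesis
    using assms by (simp add: measure_pmf_single)
qed

lemma infsum_nat_supported_on_01:
  fixes f :: "nat \<Rightarrow> real"
  assumes "\<And>x. x \<noteq> 0 \<Longrightarrow> x \<noteq> 1 \<Longrightarrow> f x = 0"
  shows "(\<Sum>\<^sub>\<infinity>x. f x) = f 0 + f 1"
proof -
  have "(\<Sum>\<^sub>\<infinity>x. f x) = (\<Sum>\<^sub>\<infinity>x\<in>{0,1}. f x)"
    by (rule infsum_cong_neutral) (use assms in auto)
  then show ?thesis by simp
qed

lemma dtv_two_point: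
  assumes "0 \<le> p" "p \<le> 1" "0 \<le> q" "q \<le> 1"
  shows "dtv (two_point p) (two_point q) = \<bar>p - q\<bar>"
  unfolding dtv_def using assms
  by (subst infsum_nat_supported_on_01) (auto simp: pmf_two_point abs_minus_commute)

lemma chernoff_sum_two_point:
  assumes "0 \<le> p" "p \<le> 1" "0 \<le> q" "q \<le> 1"
  shows "chernoff_sum (two_point p) (two_point q) l =
    (1 - p) powr l * (1 - q) powr (1 - l) + p powr l * q powr (1 - l)"
  unfolding chernoff_sum_def using assms
  by (subst infsum_nat_supported_on_01) (auto simp: pmf_two_point)

lemma powr_mix_sum_ge_two_sqrt:
  fixes a b l :: real
  assumes "a > 0" "b > 0"
  shows "2 * sqrt (a * b) \<le> a powr l * b powr (1 - l) + b powr l * a powr (1 - l)"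
proof -
  let ?x = "a powr l * b powr (1 - l)" and ?y = "b powr l * a powr (1 - l)"
  have "?x * ?y = (a powr l * a powr (1 - l)) * (b powr l * b powr (1 - l))"
    by (simp add: algebra_simps)
  also have "\<dots> = a * b"
    using assms by (simp flip: powr_add)
  finally have "?x * ?y = a * b" .
  moreover have "sqrt (?x * ?y) \<le> (?x + ?y) / 2"
    by (rule arith_geo_mean_sqrt) auto
  ultimately show ?thesis by simp
qed

lemma chernoff_symmetric_two_point_le:
  fixes \<epsilon> :: real
  assumes "0 \<le> \<epsilon>" "\<epsilon> < 1"
  shows "chernoff (two_point ((1 + \<epsilon>)/2)) (two_point ((1 - \<epsilon>)/2)) \<le> ereal (- (1/2) * ln (1 - \<epsilon>\<^sup>2))"
  unfolding chernoff_def
proof (rule SUP_least)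
  fix l :: real
  define S where "S = chernoff_sum (two_point ((1 + \<epsilon>)/2)) (two_point ((1 - \<epsilon>)/2)) l"
  have "1 - \<epsilon>\<^sup>2 > 0"
    using assms by (simp add: abs_square_less_1)
  define a b where "a = (1 - \<epsilon>)/2" and "b = (1 + \<epsilon>)/2"
  have "a > 0" "b > 0" "1 - b = a" "1 - a = b"
    using assms by (auto simp: a_def b_def field_simps)
  have "sqrt (1 - \<epsilon>\<^sup>2) = 2 * sqrt (a * b)"
    by (simp add: a_def b_def power2_eq_square algebra_simps real_sqrt_divide)
  also have "\<dots> \<le> a powr l * b powr (1 - l) + b powr l * a powr (1 - l)"
    using \<open>a > 0\<close> \<open>b > 0\<close> by (rule powr_mix_sum_ge_two_sqrt)
  also have "\<dots> = S"
    unfolding S_def b_def [symmetric] a_def [symmetric]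
    using \<open>a > 0\<close> \<open>b > 0\<close> \<open>1 - b = a\<close> \<open>1 - a = b\<close>
    by (subst chernoff_sum_two_point) auto
  finally have S_ge: "sqrt (1 - \<epsilon>\<^sup>2) \<le> S" .
  have sqrt_pos: "sqrt (1 - \<epsilon>\<^sup>2) > 0"
    using \<open>1 - \<epsilon>\<^sup>2 > 0\<close> by simp
  then have "S > 0"
    using S_ge by linarith
  moreover have "ln (sqrt (1 - \<epsilon>\<^sup>2)) \<le> ln S"
    using S_ge sqrt_pos by (rule ln_mono)
  moreover have "ln (sqrt (1 - \<epsilon>\<^sup>2)) = ln (1 - \<epsilon>\<^sup>2) / 2"
    using \<open>1 - \<epsilon>\<^sup>2 > 0\<close> by (intro ln_sqrt) simp
  ultimately show "(if S = 0 then \<infinity> else ereal (- ln S)) \<le> ereal (- (1/2) * ln (1 - \<epsilon>\<^sup>2))"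
    by simp
qed

theorem proposition2:
  fixes \<epsilon> :: real
  assumes "0 \<le> \<epsilon>" and "\<epsilon> \<le> 1"
  defines "Cval \<equiv> (if \<epsilon> < 1 then ereal (- (1/2) * ln (1 - \<epsilon>\<^sup>2)) else \<infinity>)"
  shows "(\<forall>(P::'a::countable pmf) Q. dtv P Q = \<epsilon> \<longrightarrow> Cval \<le> chernoff P Q)
       \<and> (\<exists>(P::nat pmf) Q. dtv P Q = \<epsilon> \<and> chernoff P Q = Cval)
       \<and> (\<epsilon> < 1 \<longrightarrow>
            pmf (two_point ((1 + \<epsilon>)/2)) 0 = (1 - \<epsilon>)/2
          \<and> pmf (two_point ((1 + \<epsilon>)/2)) 1 = (1 + \<epsilon>)/2
          \<and> pmf (two_point ((1 - \<epsilon>)/2)) 0 = (1 + \<epsilon>)/2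
          \<and> pmf (two_point ((1 - \<epsilon>)/2)) 1 = (1 - \<epsilon>)/2
          \<and> dtv (two_point ((1 + \<epsilon>)/2)) (two_point ((1 - \<epsilon>)/2)) = \<epsilon>
          \<and> chernoff (two_point ((1 + \<epsilon>)/2)) (two_point ((1 - \<epsilon>)/2)) = Cval)"
proof -
  let ?P = "two_point ((1 + \<epsilon>)/2)" and ?Q = "two_point ((1 - \<epsilon>)/2)"
  have lower: "Cval \<le> chernoff P Q" if "dtv P Q = \<epsilon>" for P Q :: "'b::countable pmf"
    using chernoff_lower_bound[of P Q] unfolding that Cval_def .
  have dtv_PQ: "dtv ?P ?Q = \<epsilon>"
    using assms by (subst dtv_two_point) (auto simp: field_simps)
  have chernoff_PQ: "chernoff ?P ?Q = Cval"
    using lower[OF dtv_PQ] chernoff_symmetric_two_point_le[OF assms(1)]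
    by (cases "\<epsilon> < 1") (auto simp: Cval_def)
  have pmf_PQ: "pmf ?P 0 = (1 - \<epsilon>)/2" "pmf ?P 1 = (1 + \<epsilon>)/2"
      "pmf ?Q 0 = (1 + \<epsilon>)/2" "pmf ?Q 1 = (1 - \<epsilon>)/2"
    using assms by (simp_all add: pmf_two_point field_simps)
  show ?thesis
  proof (intro conjI allI impI)
    show "Cval \<le> chernoff P Q" if "dtv P Q = \<epsilon>" for P Q :: "'a pmf"
      using lower that .
    show "\<exists>(P::nat pmf) Q. dtv P Q = \<epsilon> \<and> chernoff P Q = Cval"
      using dtv_PQ chernoff_PQ by blast
  qed (rule pmf_PQ dtv_PQ chernoff_PQ)+
qed

end
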